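(* Let $\mathcal U\subseteq M(\mathbb C)^g$ and $\mathcal V\subseteq M(\mathbb C)^{\tilde g}$ be non-commutative domains. If $f:\mathcal U\to\mathcal V$ is a proper analytic free map and $X\in\mathcal U(n)$, then the derivative $f'(X)=f[n]'(X):M_n(\mathbb C)^g\to M_n(\mathbb C)^{\tilde g}$ is one-to-one. In particular, if $g=\tilde g$, then $f'(X)$ is a vector space isomorphism.
   Context: $M_n(\mathbb C)^g$ denotes $g$-tuples of $n\times n$ complex matrices; products with matrices, unitary conjugation and direct sums of tuples are taken entrywise (direct sums block diagonally). A non-commutative set $\mathcal U\subseteq M(\mathbb C)^g$ is a sequence $(\mathcal U(n))_n$, $\mathcal U(n)\subseteq M_n(\mathbb C)^g$, closed under simultaneous unitary similarity $X\mapsto U^*XU$ and under direct sums; it is a non-commutative domain if each $\mathcal U(n)$ is open and connected. A free map $f:\mathcal U\to\mathcal V$ is a sequence of functions $f[n]:\mathcal U(n)\to\mathcal V(n)$ such that whenever $X\in\mathcal U(n)$, $Y\in\mathcal U(m)$, $\Gamma\in\mathbb C^{n\times m}$ with $X\Gamma=\Gamma Y$, then $f[n](X)\Gamma=\Gamma f[m](Y)$. It is an analytic free map if each $f[n]$ is holomorphic, and proper if each $f[n]:\mathcal U(n)\to\mathcal V(n)$ is proper (preimages of compact sets are compact). *)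

theory Defs
  imports "HOL-Analysis.Analysis"
begin

text \<open>A g-tuple of n x n complex matrices is encoded as a function
  X :: nat => nat => nat => complex, where X k i j is the (i,j) entry of the
  k-th matrix (k < g, i,j < n), all other values being 0.
  The ambient topology is the product topology on the function space, which on
  the finite-dimensional carrier ntup g n is the usual Euclidean topology.\<close>

type_synonym tup = "nat \<Rightarrow> nat \<Rightarrow> nat \<Rightarrow> complex"
type_synonym cmat = "nat \<Rightarrow> nat \<Rightarrow> complex"

definition ntup :: "nat \<Rightarrow> nat \<Rightarrow> tup set" where
  "ntup g n = {X. \<forall>k i j. (g \<le> k \<or> n \<le> i \<or> n \<le> j) \<longrightarrow> X k i j = 0}"

definition cmats :: "nat \<Rightarrow> nat \<Rightarrow> cmat set" where
  "cmats n m = {G. \<forall>i j. (n \<le> i \<or> m \<le> j) \<longrightarrow> G i j = 0}"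

definition tadd :: "tup \<Rightarrow> tup \<Rightarrow> tup" where
  "tadd X Y = (\<lambda>k i j. X k i j + Y k i j)"

definition tsub :: "tup \<Rightarrow> tup \<Rightarrow> tup" where
  "tsub X Y = (\<lambda>k i j. X k i j - Y k i j)"

definition tscale :: "complex \<Rightarrow> tup \<Rightarrow> tup" where
  "tscale a X = (\<lambda>k i j. a * X k i j)"

definition tnorm :: "nat \<Rightarrow> nat \<Rightarrow> tup \<Rightarrow> real" where
  "tnorm g n X = sqrt (\<Sum>k<g. \<Sum>i<n. \<Sum>j<n. (cmod (X k i j))\<^sup>2)"

definition rmul :: "nat \<Rightarrow> tup \<Rightarrow> cmat \<Rightarrow> tup" where
  "rmul n X G = (\<lambda>k i j. \<Sum>l<n. X k i l * G l j)"

definition lmul :: "nat \<Rightarrow> cmat \<Rightarrow> tup \<Rightarrow> tup" where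
  "lmul m G Y = (\<lambda>k i j. \<Sum>l<m. G i l * Y k l j)"

definition unitary :: "nat \<Rightarrow> cmat \<Rightarrow> bool" where
  "unitary n U \<longleftrightarrow> U \<in> cmats n n \<and>
     (\<forall>i<n. \<forall>j<n. (\<Sum>l<n. cnj (U l i) * U l j) = (if i = j then 1 else 0))"

definition uconj :: "nat \<Rightarrow> cmat \<Rightarrow> tup \<Rightarrow> tup" where
  "uconj n U X = (\<lambda>k i j. \<Sum>a<n. \<Sum>b<n. cnj (U a i) * X k a b * U b j)"

definition dsum :: "nat \<Rightarrow> tup \<Rightarrow> tup \<Rightarrow> tup" where
  "dsum n X Y = (\<lambda>k i j. if i < n \<and> j < n then X k i j
                         else if n \<le> i \<and> n \<le> j then Y k (i - n) (j - n) else 0)"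

definition nc_set :: "nat \<Rightarrow> (nat \<Rightarrow> tup set) \<Rightarrow> bool" where
  "nc_set g U \<longleftrightarrow>
     (\<forall>n\<ge>1. U n \<subseteq> ntup g n) \<and>
     (\<forall>n\<ge>1. \<forall>X\<in>U n. \<forall>W. unitary n W \<longrightarrow> uconj n W X \<in> U n) \<and>
     (\<forall>n\<ge>1. \<forall>m\<ge>1. \<forall>X\<in>U n. \<forall>Y\<in>U m. dsum n X Y \<in> U (n + m))"

definition nc_domain :: "nat \<Rightarrow> (nat \<Rightarrow> tup set) \<Rightarrow> bool" where
  "nc_domain g U \<longleftrightarrow> nc_set g U \<and>
     (\<forall>n\<ge>1. openin (top_of_set (ntup g n)) (U n) \<and> connected (U n))"

definition free_map ::
  "nat \<Rightarrow> nat \<Rightarrow> (nat \<Rightarrow> tup set) \<Rightarrow> (nat \<Rightarrow> tup set) \<Rightarrow> (nat \<Rightarrow> tup \<Rightarrow> tup) \<Rightarrow> bool" where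
  "free_map g h U V f \<longleftrightarrow>
     (\<forall>n\<ge>1. \<forall>X\<in>U n. f n X \<in> V n) \<and>
     (\<forall>n\<ge>1. \<forall>m\<ge>1. \<forall>X\<in>U n. \<forall>Y\<in>U m. \<forall>G\<in>cmats n m.
        rmul n X G = lmul m G Y \<longrightarrow> rmul n (f n X) G = lmul m G (f m Y))"

definition tlinear :: "nat \<Rightarrow> nat \<Rightarrow> nat \<Rightarrow> (tup \<Rightarrow> tup) \<Rightarrow> bool" where
  "tlinear g h n L \<longleftrightarrow> (\<forall>H\<in>ntup g n. L H \<in> ntup h n) \<and>
     (\<forall>a. \<forall>H1\<in>ntup g n. \<forall>H2\<in>ntup g n.
        L (tadd (tscale a H1) H2) = tadd (tscale a (L H1)) (L H2))"

definition has_tderiv ::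
  "nat \<Rightarrow> nat \<Rightarrow> nat \<Rightarrow> tup set \<Rightarrow> (tup \<Rightarrow> tup) \<Rightarrow> tup \<Rightarrow> (tup \<Rightarrow> tup) \<Rightarrow> bool" where
  "has_tderiv g h n S F X L \<longleftrightarrow> tlinear g h n L \<and>
     (\<forall>e>0. \<exists>d>0. \<forall>H\<in>ntup g n. tadd X H \<in> S \<and> tnorm g n H < d \<longrightarrow>
        tnorm h n (tsub (tsub (F (tadd X H)) (F X)) (L H)) \<le> e * tnorm g n H)"

definition analytic_free_map ::
  "nat \<Rightarrow> nat \<Rightarrow> (nat \<Rightarrow> tup set) \<Rightarrow> (nat \<Rightarrow> tup set) \<Rightarrow> (nat \<Rightarrow> tup \<Rightarrow> tup) \<Rightarrow> bool" where
  "analytic_free_map g h U V f \<longleftrightarrow> free_map g h U V f \<and>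
     (\<forall>n\<ge>1. \<forall>X\<in>U n. \<exists>L. has_tderiv g h n (U n) (f n) X L)"

definition proper_free_map ::
  "nat \<Rightarrow> nat \<Rightarrow> (nat \<Rightarrow> tup set) \<Rightarrow> (nat \<Rightarrow> tup set) \<Rightarrow> (nat \<Rightarrow> tup \<Rightarrow> tup) \<Rightarrow> bool" where
  "proper_free_map g h U V f \<longleftrightarrow>
     (\<forall>n\<ge>1. \<forall>K. K \<subseteq> V n \<and> compact K \<longrightarrow> compact {X \<in> U n. f n X \<in> K})"

end

theory Submission
  imports Defs "HOL-Library.Function_Algebras"
begin

text \<open>Suppose f'(X) H = 0. For the block upper triangular tuples
  Z t = [[X, t H], [0, X]] the free-map relations give
  f([[Y, c (Y - X)], [0, X]]) = [[f Y, c (f Y - f X)], [0, f X]]; writing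
  Z t + s [[H, 0], [0, 0]] in this form with Y = X + s H and c = t / s and letting s \<rightarrow> 0
  shows that f(Z t) = f(X) \<oplus> f(X) whenever Z t lies in the domain. The set of such t is
  therefore open and, by properness, closed in \<complex>, so it is all of \<complex>; but then the compact
  fibre of f over f(X) \<oplus> f(X) contains the unbounded line Z, forcing H = 0.
  For g = h an injective linear endomorphism of the finite-dimensional space M_n(\<complex>)^g is onto.\<close>

lemma tadd_0_left [simp]: "tadd 0 V = V"
  by (simp add: tadd_def)

lemma tadd_0_right [simp]: "tadd V 0 = V"
  by (simp add: tadd_def)

lemma tscale_0_left [simp]: "tscale 0 V = 0"
  by (simp add: tscale_def fun_eq_iff)

lemma tscale_0_right [simp]: "tscale s 0 = 0"
  by (simp add: tscale_def fun_eq_iff)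

lemma ntup_zero: "X \<in> ntup g n \<Longrightarrow> g \<le> k \<or> n \<le> i \<or> n \<le> j \<Longrightarrow> X k i j = 0"
  by (auto simp: ntup_def)

lemma ntup_zero_tup [simp]: "0 \<in> ntup g n"
  by (simp add: ntup_def)

lemma ntup_tadd: "V \<in> ntup g n \<Longrightarrow> W \<in> ntup g n \<Longrightarrow> tadd V W \<in> ntup g n"
  by (simp add: ntup_def tadd_def)

lemma ntup_tscale: "V \<in> ntup g n \<Longrightarrow> tscale s V \<in> ntup g n"
  by (simp add: ntup_def tscale_def)

lemma norm_entry_le_tnorm:
  assumes "k < g" "i < n" "j < n"
  shows "cmod (X k i j) \<le> tnorm g n X"
proof -
  have "(cmod (X k i j))\<^sup>2 \<le> (\<Sum>j'<n. (cmod (X k i j'))\<^sup>2)"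
    using assms by (intro member_le_sum) auto
  also have "\<dots> \<le> (\<Sum>i'<n. \<Sum>j'<n. (cmod (X k i' j'))\<^sup>2)"
    using assms by (intro member_le_sum[where f = "\<lambda>i'. \<Sum>j'<n. (cmod (X k i' j'))\<^sup>2"])
      (auto intro!: sum_nonneg)
  also have "\<dots> \<le> (\<Sum>k'<g. \<Sum>i'<n. \<Sum>j'<n. (cmod (X k' i' j'))\<^sup>2)"
    using assms by (intro member_le_sum[where f = "\<lambda>k'. \<Sum>i'<n. \<Sum>j'<n. (cmod (X k' i' j'))\<^sup>2"])
      (auto intro!: sum_nonneg)
  finally show ?thesis
    unfolding tnorm_def by (metis norm_ge_zero real_le_rsqrt)
qed

lemma tnorm_tscale: "tnorm g n (tscale s V) = cmod s * tnorm g n V"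
proof -
  have "(\<Sum>k<g. \<Sum>i<n. \<Sum>j<n. (cmod (s * V k i j))\<^sup>2)
      = (cmod s)\<^sup>2 * (\<Sum>k<g. \<Sum>i<n. \<Sum>j<n. (cmod (V k i j))\<^sup>2)"
    by (simp add: sum_distrib_left norm_mult power_mult_distrib)
  then show ?thesis
    unfolding tnorm_def tscale_def by (simp add: real_sqrt_mult)
qed

lemma tnorm_nonneg: "0 \<le> tnorm g n V"
  unfolding tnorm_def by (auto intro!: sum_nonneg)

lemma tlinear_zero:
  assumes "tlinear g h n L"
  shows "L 0 = 0"
proof -
  have "L (tadd (tscale 1 0) 0) = tadd (tscale 1 (L 0)) (L 0)"
    using assms ntup_zero_tup unfolding tlinear_def by blast
  then have "L 0 = L 0 + L 0"
    by (simp add: tadd_def tscale_def fun_eq_iff func_zero)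
  then show ?thesis
    by simp
qed

lemma tlinear_tscale:
  assumes "tlinear g h n L" "V \<in> ntup g n"
  shows "L (tscale s V) = tscale s (L V)"
proof -
  have "L (tadd (tscale s V) 0) = tadd (tscale s (L V)) (L 0)"
    using assms ntup_zero_tup unfolding tlinear_def by blast
  then show ?thesis
    using tlinear_zero[OF assms(1)] by simp
qed

lemma tlinear_tadd:
  assumes "tlinear g h n L" "V \<in> ntup g n" "W \<in> ntup g n"
  shows "L (tadd V W) = tadd (L V) (L W)"
proof -
  have "tscale 1 V = V" "tscale 1 (L V) = L V"
    by (auto simp: tscale_def)
  then show ?thesis
    using assms unfolding tlinear_def by metis
qed

lemma has_tderiv_difference_quotient_tendsto:
  assumes D: "has_tderiv g h N S F P L" and V: "V \<in> ntup g N"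
    and line: "\<forall>\<^sub>F s in at 0. tadd P (tscale s V) \<in> S"
    and idx: "k < h" "i < N" "j < N"
  shows "((\<lambda>s. (F (tadd P (tscale s V)) k i j - F P k i j) / s) \<longlongrightarrow> L V k i j) (at 0)"
proof (rule tendstoI)
  fix e :: real
  assume e: "e > 0"
  define c where "c = tnorm g N V + 1"
  have c: "c > 0" "tnorm g N V < c"
    using tnorm_nonneg[of g N V] by (auto simp: c_def)
  have "\<forall>e>0. \<exists>d>0. \<forall>H\<in>ntup g N. tadd P H \<in> S \<and> tnorm g N H < d \<longrightarrow>
      tnorm h N (tsub (tsub (F (tadd P H)) (F P)) (L H)) \<le> e * tnorm g N H"
    using D unfolding has_tderiv_def by (rule conjunct2)
  then obtain d where d: "d > 0" and approx: "\<forall>H\<in>ntup g N. tadd P H \<in> S \<and> tnorm g N H < d \<longrightarrow>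
      tnorm h N (tsub (tsub (F (tadd P H)) (F P)) (L H)) \<le> e / c * tnorm g N H"
    using e c divide_pos_pos by blast
  have "\<forall>\<^sub>F s in at 0. cmod s < d / c"
    using d c by (intro order_tendstoD(2)[OF tendsto_norm_zero[OF tendsto_ident_at]]) simp
  moreover have "\<forall>\<^sub>F s in at (0::complex). s \<noteq> 0"
    by (simp add: eventually_at_filter)
  ultimately have small: "\<forall>\<^sub>F s in at 0. s \<noteq> 0 \<and> cmod s < d / c"
    by (simp add: eventually_conj_iff)
  show "\<forall>\<^sub>F s in at 0. dist ((F (tadd P (tscale s V)) k i j - F P k i j) / s) (L V k i j) < e"
    using line small
  proof eventually_elim
    case (elim s)
    have "tnorm g N (tscale s V) \<le> cmod s * c"
      using c by (simp add: tnorm_tscale mult_left_mono)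
    also have "\<dots> < d"
      using elim c by (simp add: pos_less_divide_eq)
    finally have small_step: "tnorm g N (tscale s V) < d" .
    define R where "R = tsub (tsub (F (tadd P (tscale s V))) (F P)) (L (tscale s V))"
    have "L (tscale s V) = tscale s (L V)"
      using tlinear_tscale[OF _ V] D unfolding has_tderiv_def by blast
    then have R: "R k i j = F (tadd P (tscale s V)) k i j - F P k i j - s * L V k i j"
      by (simp add: R_def tsub_def tscale_def)
    have "cmod s * tnorm g N V < cmod s * c"
      using elim c by simp
    then have "e / c * (cmod s * tnorm g N V) < e / c * (cmod s * c)"
      using e c by (intro mult_strict_left_mono) auto
    then have bound: "e / c * (cmod s * tnorm g N V) < e * cmod s"
      using c by simp
    have "cmod (R k i j) \<le> tnorm h N R"
      by (rule norm_entry_le_tnorm[OF idx])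
    also have "\<dots> \<le> e / c * tnorm g N (tscale s V)"
      unfolding R_def using approx elim small_step ntup_tscale[OF V] by blast
    also have "\<dots> < e * cmod s"
      using bound by (simp add: tnorm_tscale)
    finally have "cmod (R k i j) / cmod s < e"
      using elim by (simp add: divide_less_eq)
    moreover have "(F (tadd P (tscale s V)) k i j - F P k i j) / s - L V k i j = R k i j / s"
      using elim by (simp add: R field_simps)
    ultimately have "cmod ((F (tadd P (tscale s V)) k i j - F P k i j) / s - L V k i j) < e"
      by (simp add: norm_divide)
    then show ?case
      by (simp add: dist_norm)
  qed
qed

lemma has_tderiv_tendsto_along_line:
  assumes D: "has_tderiv g h N S F P L" and V: "V \<in> ntup g N"
    and line: "\<forall>\<^sub>F s in at 0. tadd P (tscale s V) \<in> S"
    and idx: "k < h" "i < N" "j < N"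
  shows "((\<lambda>s. F (tadd P (tscale s V)) k i j) \<longlongrightarrow> F P k i j) (at 0)"
proof -
  have "((\<lambda>s. F P k i j + s * ((F (tadd P (tscale s V)) k i j - F P k i j) / s))
      \<longlongrightarrow> F P k i j + 0 * L V k i j) (at 0)"
    by (intro tendsto_intros has_tderiv_difference_quotient_tendsto[OF assms])
  moreover have "\<forall>\<^sub>F s in at 0.
      F P k i j + s * ((F (tadd P (tscale s V)) k i j - F P k i j) / s) = F (tadd P (tscale s V)) k i j"
    by (auto simp: eventually_at_filter)
  ultimately show ?thesis
    by (simp add: Lim_transform_eventually)
qed

lemma continuous_on_line: "continuous_on UNIV (\<lambda>s::complex. tadd A (tscale s V))"
  unfolding tadd_def tscale_def
  by (intro continuous_on_coordinatewise_then_product continuous_intros)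

lemma eventually_line_in_openin:
  assumes "openin (top_of_set (ntup g N)) S" "A \<in> S" "V \<in> ntup g N"
  shows "\<forall>\<^sub>F s in nhds 0. tadd A (tscale s V) \<in> S"
proof -
  obtain Op where Op: "open Op" "S = ntup g N \<inter> Op"
    using assms(1) unfolding openin_open by blast
  have "open ((\<lambda>s::complex. tadd A (tscale s V)) -` Op)"
    by (rule open_vimage[OF Op(1) continuous_on_line])
  moreover have "0 \<in> (\<lambda>s::complex. tadd A (tscale s V)) -` Op"
    using assms(2) Op by simp
  ultimately have "\<forall>\<^sub>F s in nhds 0. s \<in> (\<lambda>s::complex. tadd A (tscale s V)) -` Op"
    by (rule eventually_nhds_in_open)
  then show ?thesis
    using assms Op by (auto elim!: eventually_mono intro: ntup_tadd ntup_tscale)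
qed

lemma eventually_at_of_nhds: "eventually P (nhds a) \<Longrightarrow> eventually P (at a)"
  by (auto simp: eventually_at_filter elim: eventually_mono)

lemma continuous_on_entry: "continuous_on UNIV (\<lambda>W::tup. W k i j)"
proof -
  have "continuous_on UNIV (\<lambda>W::tup. W k i)"
    by (rule continuous_on_product_then_coordinatewise) simp
  then show ?thesis
    by (rule continuous_on_product_then_coordinatewise)
qed

section \<open>Block upper triangular tuples and free maps\<close>

text \<open>The tuple [[A, C], [0, B]] of 2n x 2n matrices with n x n blocks.\<close>

definition block_ut :: "nat \<Rightarrow> tup \<Rightarrow> tup \<Rightarrow> tup \<Rightarrow> tup" where
  "block_ut n A C B = (\<lambda>k i j.
     if i < n \<and> j < n then A k i j
     else if i < n \<and> n \<le> j then C k i (j - n)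
     else if n \<le> i \<and> n \<le> j then B k (i - n) (j - n) else 0)"

definition upper_right :: "nat \<Rightarrow> tup \<Rightarrow> tup" where
  "upper_right n W = (\<lambda>k i j. if i < n \<and> j < n then W k i (j + n) else 0)"

text \<open>The m x m identity placed with its top left corner at row a and column b.\<close>

definition id_block :: "nat \<Rightarrow> nat \<Rightarrow> nat \<Rightarrow> cmat" where
  "id_block m a b = (\<lambda>l j. if a \<le> l \<and> b \<le> j \<and> l - a = j - b \<and> l - a < m then 1 else 0)"

lemma dsum_eq_block_ut: "dsum n A B = block_ut n A 0 B"
  by (auto simp: dsum_def block_ut_def fun_eq_iff)

lemma block_ut_ntup:
  "A \<in> ntup g n \<Longrightarrow> C \<in> ntup g n \<Longrightarrow> B \<in> ntup g n \<Longrightarrow> block_ut n A C B \<in> ntup g (2 * n)"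
  by (auto simp: block_ut_def ntup_def)

lemma block_ut_tadd_tscale:
  "tadd (block_ut n A C B) (tscale s (block_ut n A' C' B')) =
     block_ut n (tadd A (tscale s A')) (tadd C (tscale s C')) (tadd B (tscale s B'))"
  by (auto simp: block_ut_def tadd_def tscale_def fun_eq_iff)

lemma id_block_cmats: "a + m \<le> N \<Longrightarrow> b + m \<le> M \<Longrightarrow> id_block m a b \<in> cmats N M"
  by (auto simp: id_block_def cmats_def)

lemma rmul_id_block:
  assumes "a + m \<le> N"
  shows "rmul N W (id_block m a b) k i j = (if b \<le> j \<and> j - b < m then W k i (j - b + a) else 0)"
proof -
  have "rmul N W (id_block m a b) k i j =
      (\<Sum>l<N. if l = j - b + a then (if b \<le> j \<and> j - b < m then W k i l else 0) else 0)"
    unfolding rmul_def id_block_def by (intro sum.cong) auto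
  then show ?thesis
    using assms by auto
qed

lemma lmul_id_block:
  assumes "b + m \<le> M"
  shows "lmul M (id_block m a b) W k i j = (if a \<le> i \<and> i - a < m then W k (i - a + b) j else 0)"
proof -
  have "lmul M (id_block m a b) W k i j =
      (\<Sum>l<M. if l = i - a + b then (if a \<le> i \<and> i - a < m then W k l j else 0) else 0)"
    unfolding lmul_def id_block_def by (intro sum.cong) auto
  then show ?thesis
    using assms by auto
qed

lemma rmul_diff:
  "rmul N W (\<lambda>l j. G l j - c * G' l j) k i j = rmul N W G k i j - c * rmul N W G' k i j"
  by (simp add: rmul_def algebra_simps sum_subtractf sum_distrib_left)

lemma lmul_diff:
  "lmul M (\<lambda>l j. G l j - c * G' l j) W k i j = lmul M G W k i j - c * lmul M G' W k i j"
  by (simp add: lmul_def algebra_simps sum_subtractf sum_distrib_left)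

lemma nc_set_ntup: "nc_set g U \<Longrightarrow> n \<ge> 1 \<Longrightarrow> W \<in> U n \<Longrightarrow> W \<in> ntup g n"
  unfolding nc_set_def by blast

lemma nc_set_dsum:
  "nc_set g U \<Longrightarrow> n \<ge> 1 \<Longrightarrow> A \<in> U n \<Longrightarrow> B \<in> U n \<Longrightarrow> dsum n A B \<in> U (2 * n)"
  unfolding nc_set_def mult_2 by blast

lemma free_map_in: "free_map g h U V f \<Longrightarrow> n \<ge> 1 \<Longrightarrow> X \<in> U n \<Longrightarrow> f n X \<in> V n"
  by (simp add: free_map_def)

lemma proper_free_map_compact_fibre:
  assumes "proper_free_map g h U V f" "n \<ge> 1" "Y \<in> V n"
  shows "compact {W \<in> U n. f n W = Y}"
proof -
  have "\<forall>K. K \<subseteq> V n \<and> compact K \<longrightarrow> compact {W \<in> U n. f n W \<in> K}"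
    using assms(1,2) unfolding proper_free_map_def by blast
  from this[rule_format, of "{Y}"] show ?thesis
    using assms(3) by simp
qed

context
  fixes g h :: nat and U V :: "nat \<Rightarrow> tup set" and f :: "nat \<Rightarrow> tup \<Rightarrow> tup"
  assumes ncU: "nc_set g U" and ncV: "nc_set h V" and free: "free_map g h U V f"
begin

lemma free_map_intertwines:
  assumes "n \<ge> 1" "m \<ge> 1" "X \<in> U n" "Y \<in> U m" "G \<in> cmats n m" "rmul n X G = lmul m G Y"
  shows "rmul n (f n X) G = lmul m G (f m Y)"
  using free assms unfolding free_map_def by blast

lemma free_map_ntup: "n \<ge> 1 \<Longrightarrow> X \<in> U n \<Longrightarrow> f n X \<in> ntup h n"
  using nc_set_ntup[OF ncV] free_map_in[OF free] by blast

lemma free_map_block_ut_left: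
  assumes n: "n \<ge> 1" and W: "block_ut n A C B \<in> U (2 * n)" and A: "A \<in> U n" and j: "j < n"
  shows "f (2 * n) (block_ut n A C B) k i j = (if i < n then f n A k i j else 0)"
proof -
  let ?G = "id_block n 0 0"
  have "rmul (2 * n) (block_ut n A C B) ?G = lmul n ?G A"
    using nc_set_ntup[OF ncU n A]
    by (auto simp: fun_eq_iff rmul_id_block lmul_id_block block_ut_def ntup_zero)
  then have "rmul (2 * n) (f (2 * n) (block_ut n A C B)) ?G = lmul n ?G (f n A)"
    using n W A by (intro free_map_intertwines) (auto intro: id_block_cmats)
  from fun_cong[OF fun_cong[OF fun_cong[OF this, of k], of i], of j] show ?thesis
    using j by (simp add: rmul_id_block lmul_id_block)
qed

lemma free_map_block_ut_bottom:
  assumes n: "n \<ge> 1" and W: "block_ut n A C B \<in> U (2 * n)" and B: "B \<in> U n" and i: "n \<le> i"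
  shows "f (2 * n) (block_ut n A C B) k i j = (if n \<le> j then f n B k (i - n) (j - n) else 0)"
proof -
  let ?G = "id_block n 0 n"
  have "rmul n B ?G = lmul (2 * n) ?G (block_ut n A C B)"
    using nc_set_ntup[OF ncU n B]
    by (auto simp: fun_eq_iff rmul_id_block lmul_id_block block_ut_def ntup_zero)
  then have "rmul n (f n B) ?G = lmul (2 * n) ?G (f (2 * n) (block_ut n A C B))"
    using n W B by (intro free_map_intertwines) (auto intro: id_block_cmats)
  then have eq: "rmul n (f n B) ?G k (i - n) j = lmul (2 * n) ?G (f (2 * n) (block_ut n A C B)) k (i - n) j"
    by simp
  have fB: "f n B \<in> ntup h n" and fW: "f (2 * n) (block_ut n A C B) \<in> ntup h (2 * n)"
    using n B W by (auto intro: free_map_ntup)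
  show ?thesis
  proof (cases "i < 2 * n")
    case True
    have "f (2 * n) (block_ut n A C B) k i j = lmul (2 * n) ?G (f (2 * n) (block_ut n A C B)) k (i - n) j"
      using i True by (simp add: lmul_id_block)
    also have "\<dots> = (if n \<le> j \<and> j - n < n then f n B k (i - n) (j - n) else 0)"
      by (simp add: eq[symmetric] rmul_id_block)
    finally show ?thesis
      using ntup_zero[OF fB, of k "i - n" "j - n"] by auto
  next
    case False
    then have "n \<le> i - n"
      by simp
    then show ?thesis
      using False ntup_zero[OF fW, of k i j] ntup_zero[OF fB, of k "i - n" "j - n"] by auto
  qed
qed

lemma free_map_dsum_upper_right:
  assumes n: "n \<ge> 1" and W: "dsum n A B \<in> U (2 * n)" and B: "B \<in> U n" and "i < n" "j < n"
  shows "f (2 * n) (dsum n A B) k i (j + n) = 0"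
proof -
  let ?G = "id_block n n 0"
  have "rmul (2 * n) (dsum n A B) ?G = lmul n ?G B"
    using nc_set_ntup[OF ncU n B]
    by (auto simp: fun_eq_iff rmul_id_block lmul_id_block dsum_def ntup_zero)
  then have "rmul (2 * n) (f (2 * n) (dsum n A B)) ?G = lmul n ?G (f n B)"
    using n W B by (intro free_map_intertwines) (auto intro: id_block_cmats)
  from fun_cong[OF fun_cong[OF fun_cong[OF this, of k], of i], of j] show ?thesis
    using assms by (simp add: rmul_id_block lmul_id_block)
qed

lemma free_map_block_ut:
  assumes n: "n \<ge> 1" and W: "block_ut n A C B \<in> U (2 * n)" and A: "A \<in> U n" and B: "B \<in> U n"
  shows "f (2 * n) (block_ut n A C B) =
    block_ut n (f n A) (upper_right n (f (2 * n) (block_ut n A C B))) (f n B)"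
proof (intro ext)
  fix k i j
  have fW: "f (2 * n) (block_ut n A C B) \<in> ntup h (2 * n)"
    using n W by (auto intro: free_map_ntup)
  consider "j < n" | "n \<le> i" | "i < n" "n \<le> j" "j < 2 * n" | "i < n" "2 * n \<le> j"
    by linarith
  then show "f (2 * n) (block_ut n A C B) k i j =
    block_ut n (f n A) (upper_right n (f (2 * n) (block_ut n A C B))) (f n B) k i j"
  proof cases
    case 1
    then show ?thesis
      using free_map_block_ut_left[OF n W A] by (simp add: block_ut_def)
  next
    case 2
    then show ?thesis
      using free_map_block_ut_bottom[OF n W B] by (simp add: block_ut_def)
  next
    case 3
    then show ?thesis
      by (simp add: block_ut_def upper_right_def le_add_diff_inverse2)
  next
    case 4
    then show ?thesis
      using ntup_zero[OF fW, of k i j] by (simp add: block_ut_def upper_right_def)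
  qed
qed

lemma free_map_secant_block:
  assumes n: "n \<ge> 1" and X: "X \<in> U n" and Y: "Y \<in> U n"
    and M: "block_ut n Y (tscale c (tsub Y X)) X \<in> U (2 * n)" and "i < n" "j < n"
  shows "f (2 * n) (block_ut n Y (tscale c (tsub Y X)) X) k i (j + n) = c * (f n Y k i j - f n X k i j)"
proof -
  let ?M = "block_ut n Y (tscale c (tsub Y X)) X" and ?D = "dsum n Y X"
  \<comment> \<open>?G is [[I, -c I], [0, I]], which intertwines ?M with Y \<oplus> X\<close>
  let ?G = "\<lambda>l j. id_block (2 * n) 0 0 l j - c * id_block n 0 n l j"
  have D: "?D \<in> U (2 * n)"
    by (rule nc_set_dsum[OF ncU n Y X])
  have G: "?G \<in> cmats (2 * n) (2 * n)"
    using id_block_cmats[of 0 "2 * n" "2 * n" 0 "2 * n"] id_block_cmats[of 0 n "2 * n" n "2 * n"]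
    by (auto simp: cmats_def)
  have "rmul (2 * n) ?M ?G = lmul (2 * n) ?G ?D"
    using nc_set_ntup[OF ncU n X] nc_set_ntup[OF ncU n Y]
    by (auto simp: fun_eq_iff rmul_diff lmul_diff rmul_id_block lmul_id_block block_ut_def dsum_def
        tscale_def tsub_def ntup_def algebra_simps)
  then have "rmul (2 * n) (f (2 * n) ?M) ?G = lmul (2 * n) ?G (f (2 * n) ?D)"
    using n M D G by (intro free_map_intertwines) auto
  then have "rmul (2 * n) (f (2 * n) ?M) ?G k i (j + n) = lmul (2 * n) ?G (f (2 * n) ?D) k i (j + n)"
    by simp
  then have "f (2 * n) ?M k i (j + n) - c * f (2 * n) ?M k i j =
      f (2 * n) ?D k i (j + n) - c * f (2 * n) ?D k (i + n) (j + n)"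
    using assms by (simp add: rmul_diff lmul_diff rmul_id_block lmul_id_block)
  moreover have "f (2 * n) ?M k i j = f n Y k i j"
    using free_map_block_ut_left[OF n M Y] assms by simp
  moreover have "f (2 * n) ?D k i (j + n) = 0"
    using free_map_dsum_upper_right[OF n D X] assms by simp
  moreover have "f (2 * n) ?D k (i + n) (j + n) = f n X k i j"
    using free_map_block_ut_bottom[OF n D[unfolded dsum_eq_block_ut] X] by (simp add: dsum_eq_block_ut)
  ultimately show ?thesis
    by (simp add: dsum_eq_block_ut algebra_simps)
qed

end

section \<open>The kernel of the derivative\<close>

lemma analytic_free_map_upper_right_vanishes:
  assumes ncU: "nc_domain g U" and ncV: "nc_set h V" and af: "analytic_free_map g h U V f"
    and n: "n \<ge> 1" and X: "X \<in> U n" and H: "H \<in> ntup g n"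
    and DX: "has_tderiv g h n (U n) (f n) X L" and LH: "L H = 0"
    and Z: "block_ut n X (tscale t H) X \<in> U (2 * n)"
  shows "upper_right n (f (2 * n) (block_ut n X (tscale t H) X)) = 0"
proof -
  let ?Z = "block_ut n X (tscale t H) X" and ?E = "block_ut n H 0 0"
  have ncU': "nc_set g U" and openU: "\<And>m. m \<ge> 1 \<Longrightarrow> openin (top_of_set (ntup g m)) (U m)"
    using ncU unfolding nc_domain_def by auto
  have free: "free_map g h U V f"
    using af unfolding analytic_free_map_def by blast
  define Y where "Y s = tadd X (tscale s H)" for s
  have line: "block_ut n (Y s) (tscale t H) X = tadd ?Z (tscale s ?E)" for s
    by (simp add: Y_def block_ut_tadd_tscale)
  have E: "?E \<in> ntup g (2 * n)"
    using H by (intro block_ut_ntup) simp_all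
  obtain L2 where DZ: "has_tderiv g h (2 * n) (U (2 * n)) (f (2 * n)) ?Z L2"
    using af Z n unfolding analytic_free_map_def by force
  have evY: "\<forall>\<^sub>F s in at 0. Y s \<in> U n"
    unfolding Y_def by (rule eventually_at_of_nhds[OF eventually_line_in_openin[OF openU[OF n] X H]])
  have evZ: "\<forall>\<^sub>F s in at 0. tadd ?Z (tscale s ?E) \<in> U (2 * n)"
    using n eventually_line_in_openin[OF openU Z E] by (intro eventually_at_of_nhds) simp
  show ?thesis
  proof (intro ext)
    fix k i j
    show "upper_right n (f (2 * n) ?Z) k i j = 0 k i j"
    proof (cases "k < h \<and> i < n \<and> j < n")
      case False
      then show ?thesis
        using ntup_zero[OF free_map_ntup[OF ncU' ncV free _ Z]] n by (auto simp: upper_right_def)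
    next
      case True
      then have idx: "k < h" "i < n" "j < n"
        by auto
      have lim: "((\<lambda>s. f (2 * n) (tadd ?Z (tscale s ?E)) k i (j + n)) \<longlongrightarrow> f (2 * n) ?Z k i (j + n)) (at 0)"
        using idx by (intro has_tderiv_tendsto_along_line[OF DZ E evZ]) auto
      have secant: "\<forall>\<^sub>F s in at 0.
          f (2 * n) (tadd ?Z (tscale s ?E)) k i (j + n) = t * ((f n (Y s) k i j - f n X k i j) / s)"
        using evY evZ eventually_neq_at_within[of 0]
      proof eventually_elim
        case (elim s)
        then have "tscale t H = tscale (t / s) (tsub (Y s) X)"
          by (simp add: Y_def tscale_def tsub_def tadd_def fun_eq_iff)
        then have M: "tadd ?Z (tscale s ?E) = block_ut n (Y s) (tscale (t / s) (tsub (Y s) X)) X"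
          unfolding line[symmetric] by (rule arg_cong[where f = "\<lambda>C. block_ut n (Y s) C X"])
        have "f (2 * n) (block_ut n (Y s) (tscale (t / s) (tsub (Y s) X)) X) k i (j + n)
            = t / s * (f n (Y s) k i j - f n X k i j)"
          using elim M by (intro free_map_secant_block[OF ncU' ncV free n X _ _ idx(2,3)]) simp_all
        then show ?case
          by (simp add: M)
      qed
      have quotient: "((\<lambda>s. t * ((f n (Y s) k i j - f n X k i j) / s)) \<longlongrightarrow> t * 0) (at 0)"
        using has_tderiv_difference_quotient_tendsto[OF DX H evY[unfolded Y_def] idx(1-3)] LH
        unfolding Y_def by (intro tendsto_mult_left) simp
      have "f (2 * n) ?Z k i (j + n) = t * 0"
        using Lim_transform_eventually[OF lim secant] quotient by (rule tendsto_unique[OF at_neq_bot])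
      then show ?thesis
        using idx by (simp add: upper_right_def)
    qed
  qed
qed

lemma analytic_free_map_block_ut_eq_dsum:
  assumes ncU: "nc_domain g U" and ncV: "nc_set h V" and af: "analytic_free_map g h U V f"
    and n: "n \<ge> 1" and X: "X \<in> U n" and H: "H \<in> ntup g n"
    and DX: "has_tderiv g h n (U n) (f n) X L" and LH: "L H = 0"
    and Z: "block_ut n X (tscale t H) X \<in> U (2 * n)"
  shows "f (2 * n) (block_ut n X (tscale t H) X) = dsum n (f n X) (f n X)"
proof -
  have "nc_set g U" "free_map g h U V f"
    using ncU af unfolding nc_domain_def analytic_free_map_def by auto
  from free_map_block_ut[OF this(1) ncV this(2) n Z X X]
  show ?thesis
    unfolding analytic_free_map_upper_right_vanishes[OF assms] by (simp add: dsum_eq_block_ut)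
qed

lemma proper_free_map_derivative_ker_trivial:
  assumes ncU: "nc_domain g U" and ncV: "nc_domain h V"
    and af: "analytic_free_map g h U V f" and pf: "proper_free_map g h U V f"
    and n: "n \<ge> 1" and X: "X \<in> U n" and DX: "has_tderiv g h n (U n) (f n) X L"
    and H: "H \<in> ntup g n" and LH: "L H = 0"
  shows "H = 0"
proof (rule ccontr)
  assume "H \<noteq> 0"
  then obtain k0 i0 j0 where h0: "H k0 i0 j0 \<noteq> 0"
    by (auto simp: fun_eq_iff)
  have idx0: "i0 < n" "j0 < n"
    using h0 ntup_zero[OF H] by (meson not_le)+
  have ncU': "nc_set g U" and ncV': "nc_set h V" and free: "free_map g h U V f"
    using ncU ncV af unfolding nc_domain_def analytic_free_map_def by auto
  have n2: "2 * n \<ge> 1"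
    using n by simp
  define Z where "Z t = block_ut n X (tscale t H) X" for t
  define T where "T = {t. Z t \<in> U (2 * n)}"
  define K where "K = {W \<in> U (2 * n). f (2 * n) W = dsum n (f n X) (f n X)}"
  have "dsum n (f n X) (f n X) \<in> V (2 * n)"
    using free_map_in[OF free n X] by (intro nc_set_dsum[OF ncV' n])
  then have compact_K: "compact K"
    unfolding K_def by (rule proper_free_map_compact_fibre[OF pf n2])
  have Z_line: "Z = (\<lambda>t. tadd (dsum n X X) (tscale t (block_ut n 0 H 0)))"
    by (simp add: Z_def dsum_eq_block_ut block_ut_tadd_tscale fun_eq_iff)
  have contZ: "continuous_on UNIV Z"
    unfolding Z_line by (rule continuous_on_line)
  have "open T"
  proof -
    have "openin (top_of_set (ntup g (2 * n))) (U (2 * n))"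
      using ncU n2 unfolding nc_domain_def by blast
    then obtain Op where Op: "open Op" "U (2 * n) = ntup g (2 * n) \<inter> Op"
      unfolding openin_open by blast
    have "Z t \<in> ntup g (2 * n)" for t
      unfolding Z_def using nc_set_ntup[OF ncU' n X] H by (intro block_ut_ntup ntup_tscale)
    then have "T = Z -` Op"
      using Op by (auto simp: T_def)
    then show ?thesis
      using open_vimage[OF Op(1) contZ] by simp
  qed
  moreover have "closed T"
  proof -
    have "T = Z -` K"
      using analytic_free_map_block_ut_eq_dsum[OF ncU ncV' af n X H DX LH]
      by (auto simp: T_def K_def Z_def)
    then show ?thesis
      using closed_vimage[OF compact_imp_closed[OF compact_K] contZ] by simp
  qed
  moreover have "0 \<in> T"
    using nc_set_dsum[OF ncU' n X X] by (simp add: T_def Z_def dsum_eq_block_ut)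
  ultimately have "T = UNIV"
    using clopen[of T] by blast
  then have ZK: "Z t \<in> K" for t
    using analytic_free_map_block_ut_eq_dsum[OF ncU ncV' af n X H DX LH]
    by (auto simp: T_def K_def Z_def)
  let ?entry = "\<lambda>W::tup. W k0 i0 (j0 + n)"
  have "bounded (?entry ` K)"
    using compact_K continuous_on_subset[OF continuous_on_entry subset_UNIV]
    by (intro compact_imp_bounded compact_continuous_image)
  moreover have "UNIV \<subseteq> ?entry ` K"
  proof
    fix w :: complex
    have "w = ?entry (Z (w / H k0 i0 j0))"
      using h0 idx0 by (simp add: Z_def block_ut_def tscale_def)
    then show "w \<in> ?entry ` K"
      using ZK by blast
  qed
  ultimately have "bounded (UNIV :: complex set)"
    by (rule bounded_subset)
  then show False
    by simp
qed

section \<open>Injective linear endomorphisms of a finite-dimensional subspace\<close>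

lemma (in vector_space) linear_inj_on_imp_surj_on:
  assumes lin: "Vector_Spaces.linear scale scale f" and S: "subspace S"
    and E: "finite E" "S \<subseteq> span E" and fS: "f ` S \<subseteq> S" and inj: "inj_on f S"
  shows "f ` S = S"
proof -
  interpret f: Vector_Spaces.linear scale scale f
    by (rule lin)
  obtain B where B: "B \<subseteq> S" "independent B" "S \<subseteq> span B"
    using maximal_independent_subset by blast
  have finB: "finite B"
    using independent_span_bound[OF E(1) B(2)] B(1) E(2) by blast
  have spanB: "span B = S"
    using B span_minimal[OF B(1) S] by blast
  then have "independent (f ` B)"
    using inj by (intro f.independent_injective_image[OF B(2)]) simp
  have card: "card (f ` B) = card B"
    using inj B(1) by (metis card_image inj_on_subset)
  have "S \<subseteq> span (f ` B)"
  proof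
    fix a
    assume a: "a \<in> S"
    show "a \<in> span (f ` B)"
    proof (rule ccontr)
      assume a_new: "a \<notin> span (f ` B)"
      then have "independent (insert a (f ` B))"
        using \<open>independent (f ` B)\<close> by (rule independent_insertI)
      moreover have "insert a (f ` B) \<subseteq> span B"
        using a fS B(1) spanB by auto
      ultimately have "card (insert a (f ` B)) \<le> card B"
        using independent_span_bound[OF finB] by blast
      moreover have "a \<notin> f ` B"
        using a_new span_base by blast
      ultimately show False
        using card finB by simp
    qed
  qed
  then have "S \<subseteq> f ` S"
    using spanB f.span_image by simp
  then show ?thesis
    using fS by blast
qed

interpretation tup: vector_space "tscale :: complex \<Rightarrow> tup \<Rightarrow> tup"
  by unfold_locales (auto simp: tscale_def fun_eq_iff algebra_simps)

lemma tadd_eq_plus: "tadd X Y = X + Y"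
  by (simp add: tadd_def fun_eq_iff)

lemma tup_subspace_ntup: "tup.subspace (ntup g n)"
  unfolding tup.subspace_def using ntup_tadd[of _ g n] ntup_tscale[of _ g n]
  by (simp add: tadd_eq_plus)

lemma sum_tup_apply: "finite A \<Longrightarrow> (\<Sum>p\<in>A. F p) k i j = (\<Sum>p\<in>A. (F p :: tup) k i j)"
  by (induction A rule: finite_induct) simp_all

definition unit_tup :: "nat \<Rightarrow> nat \<Rightarrow> nat \<Rightarrow> tup" where
  "unit_tup k i j = (\<lambda>k' i' j'. if k' = k \<and> i' = i \<and> j' = j then 1 else 0)"

lemma ntup_subset_span_units:
  "ntup g n \<subseteq> tup.span ((\<lambda>(k, i, j). unit_tup k i j) ` ({..<g} \<times> {..<n} \<times> {..<n}))"
  (is "_ \<subseteq> tup.span (?u ` ?I)")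
proof
  fix X
  assume X: "X \<in> ntup g n"
  have "(\<Sum>p\<in>?I. tscale (case p of (k, i, j) \<Rightarrow> X k i j) (?u p)) = X"
  proof (intro ext)
    fix k i j
    have "(\<Sum>p\<in>?I. tscale (case p of (k, i, j) \<Rightarrow> X k i j) (?u p)) k i j =
        (\<Sum>p\<in>?I. if p = (k, i, j) then X k i j else 0)"
      unfolding sum_tup_apply[OF finite_cartesian_product[OF finite_lessThan
          finite_cartesian_product[OF finite_lessThan finite_lessThan]]]
      by (intro sum.cong) (auto simp: tscale_def unit_tup_def split: if_splits)
    then show "(\<Sum>p\<in>?I. tscale (case p of (k, i, j) \<Rightarrow> X k i j) (?u p)) k i j = X k i j"
      using ntup_zero[OF X, of k i j] by auto
  qed
  moreover have "(\<Sum>p\<in>?I. tscale (case p of (k, i, j) \<Rightarrow> X k i j) (?u p)) \<in> tup.span (?u ` ?I)"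
    by (intro tup.span_sum tup.span_scale tup.span_base) auto
  ultimately show "X \<in> tup.span (?u ` ?I)"
    by simp
qed

lemma tlinear_linear_extension:
  assumes L: "tlinear g h n L"
  obtains L' where "Vector_Spaces.linear tscale tscale L'" "\<And>X. X \<in> ntup g n \<Longrightarrow> L' X = L X"
proof -
  \<comment> \<open>tlinear constrains L only on ntup g n, so precompose with the projection onto it\<close>
  define P :: "tup \<Rightarrow> tup" where "P X = (\<lambda>k i j. if k < g \<and> i < n \<and> j < n then X k i j else 0)" for X
  have P: "P X \<in> ntup g n" for X
    by (simp add: P_def ntup_def)
  have "Vector_Spaces.linear tscale tscale (\<lambda>X. L (P X))"
    unfolding Vector_Spaces.linear_iff
  proof (intro conjI allI tup.vector_space_axioms)
    fix X Y :: tup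
    have "P (X + Y) = tadd (P X) (P Y)"
      by (auto simp: P_def tadd_def fun_eq_iff)
    then show "L (P (X + Y)) = L (P X) + L (P Y)"
      using tlinear_tadd[OF L P P] by (simp add: tadd_eq_plus)
  next
    fix c :: complex and X :: tup
    have "P (tscale c X) = tscale c (P X)"
      by (auto simp: P_def tscale_def fun_eq_iff)
    then show "L (P (tscale c X)) = tscale c (L (P X))"
      using tlinear_tscale[OF L P] by simp
  qed
  moreover have "P X = X" if "X \<in> ntup g n" for X
    using that by (auto simp: P_def ntup_def fun_eq_iff)
  ultimately show ?thesis
    using that by auto
qed

lemma tlinear_inj_onI:
  assumes L: "tlinear g h n L" and ker: "\<And>H. H \<in> ntup g n \<Longrightarrow> L H = 0 \<Longrightarrow> H = 0"
  shows "inj_on L (ntup g n)"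
proof -
  obtain L' where lin: "Vector_Spaces.linear tscale tscale L'" and L': "\<And>X. X \<in> ntup g n \<Longrightarrow> L' X = L X"
    using tlinear_linear_extension[OF L] by blast
  interpret L': Vector_Spaces.linear tscale tscale L'
    by (rule lin)
  have "inj_on L' (ntup g n)"
    unfolding L'.inj_on_iff_eq_0[OF tup_subspace_ntup] using ker L' by auto
  moreover have "inj_on L (ntup g n) = inj_on L' (ntup g n)"
    by (rule inj_on_cong) (simp add: L')
  ultimately show ?thesis
    by simp
qed

lemma tlinear_inj_on_imp_surj_on:
  assumes L: "tlinear g g n L" and inj: "inj_on L (ntup g n)"
  shows "L ` ntup g n = ntup g n"
proof -
  obtain L' where lin: "Vector_Spaces.linear tscale tscale L'" and L': "\<And>X. X \<in> ntup g n \<Longrightarrow> L' X = L X"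
    using tlinear_linear_extension[OF L] by blast
  have L_L': "L ` ntup g n = L' ` ntup g n"
    by (intro image_cong) (simp_all add: L')
  have "inj_on L' (ntup g n)"
    using inj inj_on_cong[of "ntup g n" L' L] L' by simp
  moreover have "L' ` ntup g n \<subseteq> ntup g n"
    using L L' unfolding tlinear_def by auto
  moreover have "finite ((\<lambda>(k, i, j). unit_tup k i j) ` ({..<g} \<times> {..<n} \<times> {..<n}))"
    by simp
  ultimately show ?thesis
    using tup.linear_inj_on_imp_surj_on[OF lin tup_subspace_ntup _ ntup_subset_span_units] L_L' by simp
qed

theorem proposition3p4:
  fixes g h n :: nat and U V :: "nat \<Rightarrow> tup set" and f :: "nat \<Rightarrow> tup \<Rightarrow> tup"
    and X :: tup and L :: "tup \<Rightarrow> tup"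
  assumes "nc_domain g U" and "nc_domain h V"
    and "analytic_free_map g h U V f" and "proper_free_map g h U V f"
    and "n \<ge> 1" and "X \<in> U n"
    and "has_tderiv g h n (U n) (f n) X L"
  shows "inj_on L (ntup g n) \<and> (g = h \<longrightarrow> bij_betw L (ntup g n) (ntup h n))"
proof -
  have L: "tlinear g h n L"
    using assms(7) by (simp add: has_tderiv_def)
  have inj: "inj_on L (ntup g n)"
    using proper_free_map_derivative_ker_trivial[OF assms] by (rule tlinear_inj_onI[OF L])
  have "L ` ntup g n = ntup h n" if "g = h"
    using tlinear_inj_on_imp_surj_on[of g n L] L inj that by simp
  then show ?thesis
    using inj by (auto simp: bij_betw_def)
qed

end
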